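(* Let $\mathcal{F}$ satisfy the standard conditions and be closed under the minimizer operation. Then $\mathbb{R}_{\mathcal{F}}$ is a real closed field.
   Context: $\mathbb{N}=\{0,1,2,\dots\}$. $\mathcal{F}$ is a set of functions $\mathbb{N}^n\to\mathbb{N}$; it satisfies the standard conditions if it contains the zero function, the successor, all projections $P^n_i$, addition, multiplication and modified subtraction $x\dot- y=\max(x-y,0)$, and is closed under composition. For $f:\mathbb{N}^{k+1}\to\mathbb{N}$, $\mu f(x_1,\dots,x_{k+1})=\min\{j: f(x_1,\dots,x_k,j)=0\ \text{or}\ j=x_{k+1}\}$; $\mathcal{F}$ is closed under the minimizer operation if $f\in\mathcal{F}\Rightarrow\mu f\in\mathcal{F}$. An $\mathcal{F}$-sequence is $A(x)=\frac{f(x)-g(x)}{h(x)+1}$ with $f,g,h:\mathbb{N}\to\mathbb{N}$ in $\mathcal{F}$. $\alpha\in\mathbb{R}$ is $\mathcal{F}$-computable if some $\mathcal{F}$-sequence $A$ satisfies $|A(x)-\alpha|\le\frac1{x+1}$ for all $x$; $\mathbb{R}_{\mathcal{F}}$ is the set of $\mathcal{F}$-computable reals. *)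

theory Defs
  imports "HOL-Computational_Algebra.Polynomial"
begin

text \<open>A class of number-theoretic functions is represented as a set of pairs (n, f),
  where n is the arity and f :: nat list \<Rightarrow> nat; only the values of f on
  argument lists of length n are relevant.\<close>

type_synonym fclass = "(nat \<times> (nat list \<Rightarrow> nat)) set"

definition in_F :: "fclass \<Rightarrow> nat \<Rightarrow> (nat list \<Rightarrow> nat) \<Rightarrow> bool" where
  "in_F F n f \<longleftrightarrow> (\<exists>g. (n, g) \<in> F \<and> (\<forall>xs. length xs = n \<longrightarrow> g xs = f xs))"

definition standard_conditions :: "fclass \<Rightarrow> bool" where
  "standard_conditions F \<longleftrightarrow>
     in_F F 1 (\<lambda>xs. 0) \<and>
     in_F F 1 (\<lambda>xs. Suc (xs ! 0)) \<and>
     (\<forall>n i. 1 \<le> i \<and> i \<le> n \<longrightarrow> in_F F n (\<lambda>xs. xs ! (i - 1))) \<and>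
     in_F F 2 (\<lambda>xs. xs ! 0 + xs ! 1) \<and>
     in_F F 2 (\<lambda>xs. xs ! 0 * xs ! 1) \<and>
     in_F F 2 (\<lambda>xs. xs ! 0 - xs ! 1) \<and>
     (\<forall>m n f gs. in_F F m f \<and> length gs = m \<and> (\<forall>g \<in> set gs. in_F F n g)
        \<longrightarrow> in_F F n (\<lambda>xs. f (map (\<lambda>g. g xs) gs)))"

definition minimizer :: "(nat list \<Rightarrow> nat) \<Rightarrow> nat list \<Rightarrow> nat" where
  "minimizer f xs = (LEAST j. f (butlast xs @ [j]) = 0 \<or> j = last xs)"

definition closed_under_minimizer :: "fclass \<Rightarrow> bool" where
  "closed_under_minimizer F \<longleftrightarrow>
     (\<forall>k f. in_F F (Suc k) f \<longrightarrow> in_F F (Suc k) (minimizer f))"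

definition F_sequence :: "fclass \<Rightarrow> (nat \<Rightarrow> real) \<Rightarrow> bool" where
  "F_sequence F A \<longleftrightarrow> (\<exists>f g h. in_F F 1 (\<lambda>xs. f (xs ! 0)) \<and> in_F F 1 (\<lambda>xs. g (xs ! 0))
      \<and> in_F F 1 (\<lambda>xs. h (xs ! 0))
      \<and> (\<forall>x. A x = (real (f x) - real (g x)) / (real (h x) + 1)))"

definition F_computable :: "fclass \<Rightarrow> real \<Rightarrow> bool" where
  "F_computable F \<alpha> \<longleftrightarrow> (\<exists>A. F_sequence F A \<and> (\<forall>x. \<bar>A x - \<alpha>\<bar> \<le> 1 / (real x + 1)))"

definition F_reals :: "fclass \<Rightarrow> real set" where
  "F_reals F = {\<alpha>. F_computable F \<alpha>}"

text \<open>A subfield of the reals which is real closed: every nonnegative element has a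
  square root in it and every odd-degree polynomial with coefficients in it has a root in it
  (Artin--Schreier characterization of real closed fields, for subfields of an ordered field).\<close>

definition real_subfield :: "real set \<Rightarrow> bool" where
  "real_subfield S \<longleftrightarrow> 0 \<in> S \<and> 1 \<in> S \<and>
     (\<forall>x\<in>S. \<forall>y\<in>S. x + y \<in> S \<and> x - y \<in> S \<and> x * y \<in> S) \<and>
     (\<forall>x\<in>S. x \<noteq> 0 \<longrightarrow> inverse x \<in> S)"

definition real_closed_subfield :: "real set \<Rightarrow> bool" where
  "real_closed_subfield S \<longleftrightarrow> real_subfield S \<and>
     (\<forall>x\<in>S. x \<ge> 0 \<longrightarrow> (\<exists>y\<in>S. y * y = x)) \<and>
     (\<forall>p :: real poly. (\<forall>i. coeff p i \<in> S) \<and> odd (degree p) \<longrightarrow> (\<exists>x\<in>S. poly p x = 0))"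

end

theory Submission
  imports Defs
begin

text \<open>
  Field operations act on approximating sequences directly; in truncated arithmetic the
  differences \<open>f - g\<close> and \<open>g - f\<close> decide signs, which is all that inversion needs.
  For real closedness, an odd-degree polynomial \<open>p\<close> with F-computable coefficients has a
  real root \<open>r\<close> of odd multiplicity \<open>k\<close>, so near \<open>r\<close> it changes sign with
  \<open>\<bar>p t\<bar> \<ge> D \<bar>t - r\<bar>\<^sup>k\<close>. Evaluating \<open>p\<close> with approximated coefficients on a rational
  grid of mesh \<open>e\<close> around \<open>r\<close>, accurately enough to get the sign right wherever
  \<open>\<bar>t - r\<bar> \<ge> e\<close>, the bounded minimizer finds the first grid point with a nonnegative
  value, and that point is within \<open>2 e\<close> of \<open>r\<close>. Square roots are roots of \<open>X\<^sup>2 - x\<close>.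
\<close>

section \<open>Real polynomials\<close>

lemma poly_bounded_below_near:
  fixes g :: "real poly"
  assumes "poly g r > 0"
  obtains \<eta> where "\<eta> > 0" "\<And>t. \<bar>t - r\<bar> \<le> \<eta> \<Longrightarrow> poly g r / 2 \<le> poly g t"
proof -
  have "\<forall>\<^sub>F t in at r. poly g r / 2 < poly g t"
    using assms poly_isCont[of r g] by (intro order_tendstoD) (auto simp: isCont_def)
  then obtain d where "d > 0" and d: "\<And>t. t \<noteq> r \<Longrightarrow> dist t r < d \<Longrightarrow> poly g r / 2 < poly g t"
    unfolding eventually_at by blast
  show ?thesis
  proof (rule that)
    show "d / 2 > 0" using \<open>d > 0\<close> by simp
    show "poly g r / 2 \<le> poly g t" if "\<bar>t - r\<bar> \<le> d / 2" for t
      using that d[of t] \<open>d > 0\<close> assms by (cases "t = r") (auto simp: dist_real_def)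
  qed
qed

text \<open>For \<open>\<bar>t - r\<bar> \<ge> e\<close> the value of \<open>(X - r)\<^sup>k g\<close> at \<open>t\<close> has the sign of \<open>t - r\<close>
  and absolute value at least \<open>D e\<^sup>k\<close>.\<close>

lemma odd_root_sign_test:
  fixes g :: "real poly"
  assumes "odd k" and g: "\<And>t. \<bar>t - r\<bar> \<le> \<eta> \<Longrightarrow> D \<le> poly g t" and "0 < e" "\<bar>t - r\<bar> \<le> \<eta>"
    and y: "\<bar>y - poly ([:-r, 1:] ^ k * g) t\<bar> < D * e ^ k"
  shows "0 \<le> y \<Longrightarrow> r < t + e" and "y < 0 \<Longrightarrow> t - e < r"
proof -
  have "D \<le> poly g t" using g assms(4) .
  have "0 < e ^ k" using \<open>0 < e\<close> by simp
  moreover have "0 \<le> D * e ^ k" using y by linarith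
  ultimately have "0 \<le> D" by (auto simp: zero_le_mult_iff)
  have p: "poly ([:-r, 1:] ^ k * g) t = (t - r) ^ k * poly g t" by (simp add: poly_power)
  show "r < t + e" if "0 \<le> y"
  proof (rule ccontr)
    assume "\<not> r < t + e"
    then have "e ^ k \<le> (r - t) ^ k" using \<open>0 < e\<close> by (intro power_mono) auto
    then have "(t - r) ^ k \<le> - (e ^ k)"
      using power_minus_odd[OF \<open>odd k\<close>, of "r - t"] by simp
    then have "(t - r) ^ k * poly g t \<le> (t - r) ^ k * D"
      using \<open>D \<le> poly g t\<close> \<open>0 < e ^ k\<close> by (intro mult_left_mono_neg) auto
    also have "\<dots> \<le> - (e ^ k) * D"
      using \<open>(t - r) ^ k \<le> - (e ^ k)\<close> \<open>0 \<le> D\<close> by (rule mult_right_mono)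
    finally show False using p y that by (simp add: abs_less_iff algebra_simps)
  qed
  show "t - e < r" if "y < 0"
  proof (rule ccontr)
    assume "\<not> t - e < r"
    then have "e ^ k \<le> (t - r) ^ k" using \<open>0 < e\<close> by (intro power_mono) auto
    moreover have "0 \<le> (t - r) ^ k" using \<open>\<not> t - e < r\<close> \<open>0 < e\<close> by simp
    ultimately have "e ^ k * D \<le> (t - r) ^ k * poly g t"
      using \<open>D \<le> poly g t\<close> \<open>0 \<le> D\<close> by (intro mult_mono) auto
    then show False using p y that by (simp add: abs_less_iff algebra_simps)
  qed
qed

lemma poly_perturbed_coeffs_error:
  fixes p :: "real poly"
  assumes "\<And>i. i \<le> degree p \<Longrightarrow> \<bar>c i - coeff p i\<bar> \<le> E" "\<bar>t\<bar> \<le> R" "1 \<le> R"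
  shows "\<bar>(\<Sum>i\<le>degree p. c i * t ^ i) - poly p t\<bar> \<le> (real (degree p) + 1) * R ^ degree p * E"
proof -
  have "\<bar>(\<Sum>i\<le>degree p. c i * t ^ i) - poly p t\<bar> = \<bar>\<Sum>i\<le>degree p. (c i - coeff p i) * t ^ i\<bar>"
    by (simp add: poly_altdef sum_subtractf algebra_simps)
  also have "\<dots> \<le> (\<Sum>i\<le>degree p. \<bar>(c i - coeff p i) * t ^ i\<bar>)"
    by (rule sum_abs)
  also have "\<dots> \<le> (\<Sum>i\<le>degree p. E * R ^ degree p)"
  proof (rule sum_mono)
    fix i assume "i \<in> {..degree p}"
    have "\<bar>t\<bar> ^ i \<le> R ^ i" using assms(2) by (intro power_mono) auto
    also have "\<dots> \<le> R ^ degree p"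
      using \<open>i \<in> {..degree p}\<close> assms(3) by (intro power_increasing) auto
    finally show "\<bar>(c i - coeff p i) * t ^ i\<bar> \<le> E * R ^ degree p"
      using assms(1) \<open>i \<in> {..degree p}\<close> by (simp add: abs_mult power_abs mult_mono')
  qed
  finally show ?thesis by (simp add: algebra_simps)
qed

lemma grid_offset_bounds:
  fixes \<delta> :: real
  assumes "j \<le> x + 1" "0 \<le> \<delta>"
  shows "0 \<le> real j * \<delta> / (real x + 1)" "real j * \<delta> / (real x + 1) \<le> \<delta>"
proof -
  have "real j * \<delta> \<le> (real x + 1) * \<delta>"
    using assms by (intro mult_right_mono) auto
  then show "real j * \<delta> / (real x + 1) \<le> \<delta>" by (simp add: field_simps)
qed (use assms in simp)

lemma poly_odd_degree_root_lead_coeff_pos: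
  fixes p :: "real poly"
  assumes "odd (degree p)" "lead_coeff p > 0"
  shows "\<exists>x. poly p x = 0"
proof -
  obtain n where n: "\<And>x. n \<le> x \<Longrightarrow> lead_coeff p \<le> poly p x"
    using poly_pinfty_gt_lc[OF assms(2)] by blast
  define q where "q = - pcompose p [:0, -1:]"
  have "lead_coeff (pcompose p [:0, -1:]) = lead_coeff p * (-1) ^ degree p"
    by (subst lead_coeff_comp) auto
  then have "lead_coeff q = lead_coeff p"
    using assms(1) by (simp add: q_def lead_coeff_minus)
  moreover have "degree q = degree p" by (simp add: q_def degree_pcompose)
  ultimately obtain m where m: "\<And>x. m \<le> x \<Longrightarrow> lead_coeff p \<le> poly q x"
    using poly_pinfty_gt_lc[of q] assms by auto
  have "m \<le> \<bar>m\<bar> + 1" "n \<le> \<bar>n\<bar> + 1" by linarith+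
  then have "poly p (- \<bar>m\<bar> - 1) < 0" "poly p (\<bar>n\<bar> + 1) > 0"
    using m[of "\<bar>m\<bar> + 1"] n[of "\<bar>n\<bar> + 1"] assms(2) by (simp_all add: q_def poly_pcompose)
  moreover have "- \<bar>m\<bar> - 1 < \<bar>n\<bar> + 1" by simp
  ultimately show ?thesis using poly_IVT_pos by blast
qed

lemma poly_odd_degree_root:
  fixes p :: "real poly"
  assumes "odd (degree p)"
  shows "\<exists>x. poly p x = 0"
proof (cases "lead_coeff p > 0")
  case True
  with assms show ?thesis by (rule poly_odd_degree_root_lead_coeff_pos)
next
  case False
  have "lead_coeff p \<noteq> 0" using assms by auto
  with False have "lead_coeff p < 0" by linarith
  then have "lead_coeff (- p) > 0" by (simp add: lead_coeff_minus)
  with assms show ?thesis using poly_odd_degree_root_lead_coeff_pos[of "- p"] by auto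
qed

lemma poly_odd_degree_odd_order_root:
  fixes p :: "real poly"
  assumes "odd (degree p)"
  shows "\<exists>x. odd (order x p)"
  using assms
proof (induction "degree p" arbitrary: p rule: less_induct)
  case less
  obtain r where "poly p r = 0" using poly_odd_degree_root[OF less.prems] by blast
  have "p \<noteq> 0" using less.prems by auto
  show ?case
  proof (cases "odd (order r p)")
    case True then show ?thesis by blast
  next
    case False
    define k where "k = order r p"
    obtain q where q: "p = [:-r, 1:] ^ k * q" using order_decomp[OF \<open>p \<noteq> 0\<close>] unfolding k_def by blast
    have "q \<noteq> 0" using \<open>p \<noteq> 0\<close> q by auto
    have "k \<noteq> 0" using \<open>poly p r = 0\<close> \<open>p \<noteq> 0\<close> order_root unfolding k_def by blast
    have "degree p = k + degree q"
      using q \<open>q \<noteq> 0\<close> by (simp add: degree_mult_eq degree_power_eq)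
    then obtain s where s: "odd (order s q)"
      using less.hyps[of q] less.prems False \<open>k \<noteq> 0\<close> unfolding k_def by auto
    have "order s p = order s ([:-r, 1:] ^ k) + order s q"
      using q \<open>p \<noteq> 0\<close> order_mult by metis
    moreover have "order s ([:-r, 1:] ^ k) = (if s = r then k else 0)"
      by (auto simp: order_power_n_n poly_power intro: order_0I)
    ultimately have "odd (order s p)" using s False unfolding k_def by auto
    then show ?thesis by blast
  qed
qed

section \<open>Arithmetic of the class and of F-computable reals\<close>

lemma in_F_cong: "in_F F n f \<Longrightarrow> (\<And>xs. length xs = n \<Longrightarrow> f xs = g xs) \<Longrightarrow> in_F F n g"
  unfolding in_F_def by metis

locale standard_class =
  fixes F :: fclass
  assumes standard: "standard_conditions F"
begin

lemma in_F_proj: "i < n \<Longrightarrow> in_F F n (\<lambda>xs. xs ! i)"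
proof -
  assume "i < n"
  then have "in_F F n (\<lambda>xs. xs ! (Suc i - 1))"
    using standard unfolding standard_conditions_def by (metis Suc_leI le_add1 plus_1_eq_Suc)
  then show ?thesis by simp
qed

lemma in_F_compose:
  "in_F F m f \<Longrightarrow> length gs = m \<Longrightarrow> (\<forall>g\<in>set gs. in_F F n g) \<Longrightarrow>
     in_F F n (\<lambda>xs. f (map (\<lambda>g. g xs) gs))"
  using standard unfolding standard_conditions_def by blast

lemma in_F_compose1: "in_F F 1 u \<Longrightarrow> in_F F n f \<Longrightarrow> in_F F n (\<lambda>xs. u [f xs])"
  using in_F_compose[of 1 u "[f]" n] by simp

lemma in_F_compose2:
  "in_F F 2 u \<Longrightarrow> in_F F n f \<Longrightarrow> in_F F n g \<Longrightarrow> in_F F n (\<lambda>xs. u [f xs, g xs])"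
  using in_F_compose[of 2 u "[f, g]" n] by simp

lemma in_F_add: "in_F F n f \<Longrightarrow> in_F F n g \<Longrightarrow> in_F F n (\<lambda>xs. f xs + g xs)"
  using standard in_F_compose2[of "\<lambda>xs. xs ! 0 + xs ! 1"]
  unfolding standard_conditions_def by simp

lemma in_F_mult: "in_F F n f \<Longrightarrow> in_F F n g \<Longrightarrow> in_F F n (\<lambda>xs. f xs * g xs)"
  using standard in_F_compose2[of "\<lambda>xs. xs ! 0 * xs ! 1"]
  unfolding standard_conditions_def by simp

lemma in_F_diff: "in_F F n f \<Longrightarrow> in_F F n g \<Longrightarrow> in_F F n (\<lambda>xs. f xs - g xs)"
  using standard in_F_compose2[of "\<lambda>xs. xs ! 0 - xs ! 1"]
  unfolding standard_conditions_def by simp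

lemma in_F_const: "0 < n \<Longrightarrow> in_F F n (\<lambda>xs. c)"
proof (induction c)
  case 0
  have "in_F F 1 (\<lambda>xs. 0)"
    using standard unfolding standard_conditions_def by blast
  from in_F_compose1[OF this in_F_proj[OF 0]] show ?case by simp
next
  case (Suc c)
  then show ?case
    using standard in_F_compose1[of "\<lambda>xs. Suc (xs ! 0)"]
    unfolding standard_conditions_def by simp
qed

lemma in_F_power: "0 < n \<Longrightarrow> in_F F n f \<Longrightarrow> in_F F n (\<lambda>xs. f xs ^ k)"
  by (induction k) (auto intro: in_F_mult in_F_const)

lemma in_F_indicator: "0 < n \<Longrightarrow> in_F F n f \<Longrightarrow> in_F F n (\<lambda>xs. if f xs = 0 then 0 else 1)"
proof -
  assume "0 < n" "in_F F n f"
  then have "in_F F n (\<lambda>xs. 1 - (1 - f xs))"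
    by (intro in_F_diff in_F_const)
  then show ?thesis by (rule in_F_cong) simp
qed

text \<open>For \<open>n = 1\<close>, reading \<open>Q\<close> at \<open>[x]\<close> gives exactly the F-sequences.\<close>

definition F_rational :: "nat \<Rightarrow> (nat list \<Rightarrow> real) \<Rightarrow> bool" where
  "F_rational n Q \<longleftrightarrow> (\<exists>f g h. in_F F n f \<and> in_F F n g \<and> in_F F n h \<and>
     (\<forall>xs. length xs = n \<longrightarrow> Q xs = (real (f xs) - real (g xs)) / (real (h xs) + 1)))"

lemma F_rationalI:
  "in_F F n f \<Longrightarrow> in_F F n g \<Longrightarrow> in_F F n h \<Longrightarrow>
   (\<And>xs. length xs = n \<Longrightarrow> Q xs = (real (f xs) - real (g xs)) / (real (h xs) + 1)) \<Longrightarrow>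
   F_rational n Q"
  unfolding F_rational_def by blast

lemma F_rationalE:
  assumes "F_rational n Q"
  obtains f g h where "in_F F n f" "in_F F n g" "in_F F n h"
    "\<And>xs. length xs = n \<Longrightarrow> Q xs = (real (f xs) - real (g xs)) / (real (h xs) + 1)"
  using assms unfolding F_rational_def by blast

lemma F_rational_of_nat: "0 < n \<Longrightarrow> in_F F n f \<Longrightarrow> F_rational n (\<lambda>xs. real (f xs))"
  by (rule F_rationalI[of n f "\<lambda>_. 0" "\<lambda>_. 0"]) (auto intro: in_F_const)

lemma F_rational_of_int: "0 < n \<Longrightarrow> F_rational n (\<lambda>xs. real_of_int c)"
  by (rule F_rationalI[of n "\<lambda>_. nat c" "\<lambda>_. nat (- c)" "\<lambda>_. 0"]) (auto intro: in_F_const)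

lemma F_rational_uminus:
  assumes "F_rational n Q"
  shows "F_rational n (\<lambda>xs. - Q xs)"
proof -
  obtain f g h where Q: "in_F F n f" "in_F F n g" "in_F F n h"
    "\<And>xs. length xs = n \<Longrightarrow> Q xs = (real (f xs) - real (g xs)) / (real (h xs) + 1)"
    using assms by (rule F_rationalE) blast
  show ?thesis
    by (rule F_rationalI[OF Q(2,1,3)]) (simp add: Q(4) field_simps)
qed

lemma F_rational_add:
  assumes "0 < n" "F_rational n P" "F_rational n Q"
  shows "F_rational n (\<lambda>xs. P xs + Q xs)"
proof -
  obtain f g h where P: "in_F F n f" "in_F F n g" "in_F F n h"
    "\<And>xs. length xs = n \<Longrightarrow> P xs = (real (f xs) - real (g xs)) / (real (h xs) + 1)"
    using assms(2) by (rule F_rationalE) blast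
  obtain f' g' h' where Q: "in_F F n f'" "in_F F n g'" "in_F F n h'"
    "\<And>xs. length xs = n \<Longrightarrow> Q xs = (real (f' xs) - real (g' xs)) / (real (h' xs) + 1)"
    using assms(3) by (rule F_rationalE) blast
  show ?thesis
    by (rule F_rationalI[where f = "\<lambda>xs. f xs * (h' xs + 1) + f' xs * (h xs + 1)"
          and g = "\<lambda>xs. g xs * (h' xs + 1) + g' xs * (h xs + 1)"
          and h = "\<lambda>xs. h xs * h' xs + h xs + h' xs"])
      (use P(1-3) Q(1-3) assms(1) in
        \<open>auto intro!: in_F_add in_F_mult in_F_const simp: P(4) Q(4) field_simps\<close>)
qed

lemma F_rational_mult:
  assumes "0 < n" "F_rational n P" "F_rational n Q"
  shows "F_rational n (\<lambda>xs. P xs * Q xs)"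
proof -
  obtain f g h where P: "in_F F n f" "in_F F n g" "in_F F n h"
    "\<And>xs. length xs = n \<Longrightarrow> P xs = (real (f xs) - real (g xs)) / (real (h xs) + 1)"
    using assms(2) by (rule F_rationalE) blast
  obtain f' g' h' where Q: "in_F F n f'" "in_F F n g'" "in_F F n h'"
    "\<And>xs. length xs = n \<Longrightarrow> Q xs = (real (f' xs) - real (g' xs)) / (real (h' xs) + 1)"
    using assms(3) by (rule F_rationalE) blast
  show ?thesis
    by (rule F_rationalI[where f = "\<lambda>xs. f xs * f' xs + g xs * g' xs"
          and g = "\<lambda>xs. f xs * g' xs + g xs * f' xs"
          and h = "\<lambda>xs. h xs * h' xs + h xs + h' xs"])
      (use P(1-3) Q(1-3) assms(1) in
        \<open>auto intro!: in_F_add in_F_mult in_F_const simp: P(4) Q(4) field_simps\<close>)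
qed

text \<open>In truncated arithmetic \<open>f - g\<close> and \<open>g - f\<close> decide the sign of the numerator,
  and their sum is its absolute value.\<close>

lemma F_rational_inverse:
  assumes "0 < n" "F_rational n P"
  shows "F_rational n (\<lambda>xs. inverse (P xs))"
proof -
  obtain f g h where P: "in_F F n f" "in_F F n g" "in_F F n h"
    "\<And>xs. length xs = n \<Longrightarrow> P xs = (real (f xs) - real (g xs)) / (real (h xs) + 1)"
    using assms(2) by (rule F_rationalE) blast
  show ?thesis
  proof (rule F_rationalI[where f = "\<lambda>xs. (if f xs - g xs = 0 then 0 else 1) * (h xs + 1)"
        and g = "\<lambda>xs. (if g xs - f xs = 0 then 0 else 1) * (h xs + 1)"
        and h = "\<lambda>xs. (f xs - g xs) + (g xs - f xs) - 1"])
    fix xs :: "nat list" assume "length xs = n"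
    then show "inverse (P xs) = (real ((if f xs - g xs = 0 then 0 else 1) * (h xs + 1)) -
        real ((if g xs - f xs = 0 then 0 else 1) * (h xs + 1))) /
        (real (f xs - g xs + (g xs - f xs) - 1) + 1)"
      by (cases "f xs < g xs"; cases "g xs < f xs") (auto simp: P(4) of_nat_diff field_simps)
  next
    have "in_F F n (\<lambda>xs. (if a xs = 0 then 0 else 1) * (h xs + 1))" if "in_F F n a" for a
      using that P(3) assms(1) by (intro in_F_mult in_F_indicator in_F_add in_F_const)
    then show "in_F F n (\<lambda>xs. (if f xs - g xs = 0 then 0 else 1) * (h xs + 1))"
      and "in_F F n (\<lambda>xs. (if g xs - f xs = 0 then 0 else 1) * (h xs + 1))"
      using P(1,2) by (simp_all only: in_F_diff)
    show "in_F F n (\<lambda>xs. f xs - g xs + (g xs - f xs) - 1)"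
      using P(1,2) assms(1) by (intro in_F_diff in_F_add in_F_const)
  qed
qed

lemma F_rational_divide:
  "0 < n \<Longrightarrow> F_rational n P \<Longrightarrow> F_rational n Q \<Longrightarrow> F_rational n (\<lambda>xs. P xs / Q xs)"
  using F_rational_mult[of n P "\<lambda>xs. inverse (Q xs)"] F_rational_inverse[of n Q]
  by (simp add: field_simps)

lemma F_rational_of_rat: "0 < n \<Longrightarrow> q \<in> \<rat> \<Longrightarrow> F_rational n (\<lambda>xs. q)"
  by (erule Rats_cases') (simp add: F_rational_divide F_rational_of_int)

lemma F_rational_power: "0 < n \<Longrightarrow> F_rational n P \<Longrightarrow> F_rational n (\<lambda>xs. P xs ^ k)"
  by (induction k) (simp_all add: F_rational_mult F_rational_of_rat)

lemma F_rational_sum: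
  assumes "0 < n" "finite I" "\<And>i. i \<in> I \<Longrightarrow> F_rational n (P i)"
  shows "F_rational n (\<lambda>xs. \<Sum>i\<in>I. P i xs)"
  using assms(2,3)
  by (induction I rule: finite_induct) (simp_all add: assms(1) F_rational_add F_rational_of_rat)

lemma F_rational_compose1:
  "F_rational 1 Q \<Longrightarrow> in_F F n u \<Longrightarrow> F_rational n (\<lambda>xs. Q [u xs])"
  by (erule F_rationalE, rule F_rationalI) (auto intro: in_F_compose1)

lemma F_rational_nonpos_test:
  assumes "F_rational n Q"
  obtains T where "in_F F n T" "\<And>xs. length xs = n \<Longrightarrow> T xs = 0 \<longleftrightarrow> Q xs \<le> 0"
proof -
  obtain f g h where Q: "in_F F n f" "in_F F n g" "in_F F n h"
    "\<And>xs. length xs = n \<Longrightarrow> Q xs = (real (f xs) - real (g xs)) / (real (h xs) + 1)"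
    using assms by (rule F_rationalE) blast
  have "f xs - g xs = 0 \<longleftrightarrow> Q xs \<le> 0" if "length xs = n" for xs
    using Q(4)[OF that] by (simp add: divide_le_0_iff add_nonneg_pos)
  with in_F_diff[OF Q(1,2)] that show ?thesis by blast
qed

lemma F_realsE:
  assumes "\<alpha> \<in> F_reals F"
  obtains Q where "F_rational 1 Q" "\<And>x. \<bar>Q [x] - \<alpha>\<bar> \<le> 1 / (real x + 1)"
proof -
  obtain A f g h where A: "in_F F 1 (\<lambda>xs. f (xs ! 0))" "in_F F 1 (\<lambda>xs. g (xs ! 0))"
      "in_F F 1 (\<lambda>xs. h (xs ! 0))" "\<And>x. A x = (real (f x) - real (g x)) / (real (h x) + 1)"
      "\<And>x. \<bar>A x - \<alpha>\<bar> \<le> 1 / (real x + 1)"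
    using assms unfolding F_reals_def F_computable_def F_sequence_def by blast
  have "F_rational 1 (\<lambda>xs. A (xs ! 0))"
    by (rule F_rationalI[OF A(1-3)]) (simp add: A(4))
  with A(5) that show ?thesis by simp
qed

lemma F_realsI:
  assumes "F_rational 1 Q" "\<And>x. \<bar>Q [x] - \<alpha>\<bar> \<le> 1 / (real x + 1)"
  shows "\<alpha> \<in> F_reals F"
proof -
  obtain f g h where Q: "in_F F 1 f" "in_F F 1 g" "in_F F 1 h"
    "\<And>xs. length xs = 1 \<Longrightarrow> Q xs = (real (f xs) - real (g xs)) / (real (h xs) + 1)"
    using assms(1) by (rule F_rationalE) blast
  have unary: "in_F F 1 (\<lambda>xs. u [xs ! 0])" if "in_F F 1 u" for u
    using that by (rule in_F_cong) (auto simp: length_Suc_conv)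
  have "F_sequence F (\<lambda>x. Q [x])"
    unfolding F_sequence_def using unary[OF Q(1)] unary[OF Q(2)] unary[OF Q(3)]
    by (intro exI[of _ "\<lambda>x. f [x]"] exI[of _ "\<lambda>x. g [x]"] exI[of _ "\<lambda>x. h [x]"])
      (simp add: Q(4))
  with assms(2) show ?thesis
    unfolding F_reals_def F_computable_def by blast
qed

text \<open>An error bound \<open>K / (x + 1)\<close> is turned into \<open>1 / (x + 1)\<close> by querying the
  approximation at \<open>K x + K - 1\<close>.\<close>

lemma F_realsI_scaled:
  assumes "F_rational 1 Q" "0 < K" "\<And>x. \<bar>Q [x] - \<alpha>\<bar> \<le> real K / (real x + 1)"
  shows "\<alpha> \<in> F_reals F"
proof (rule F_realsI)
  have "in_F F 1 (\<lambda>xs. K * xs ! 0 + (K - 1))"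
    by (intro in_F_add in_F_mult in_F_const in_F_proj) auto
  then show "F_rational 1 (\<lambda>xs. Q [K * xs ! 0 + (K - 1)])"
    by (rule F_rational_compose1[OF assms(1)])
  fix x
  have "real (K * x + (K - 1)) + 1 = real K * (real x + 1)"
    using assms(2) by (simp add: of_nat_diff algebra_simps)
  then show "\<bar>Q [K * [x] ! 0 + (K - 1)] - \<alpha>\<bar> \<le> 1 / (real x + 1)"
    using assms(2) assms(3)[of "K * x + (K - 1)"] by simp
qed

lemma F_reals_of_rat: "q \<in> \<rat> \<Longrightarrow> q \<in> F_reals F"
  by (rule F_realsI[OF F_rational_of_rat]) auto

lemma F_reals_uminus: "\<alpha> \<in> F_reals F \<Longrightarrow> - \<alpha> \<in> F_reals F"
  by (erule F_realsE, erule F_realsI[OF F_rational_uminus]) (simp add: abs_minus_commute)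

lemma F_reals_add:
  assumes "\<alpha> \<in> F_reals F" "\<beta> \<in> F_reals F"
  shows "\<alpha> + \<beta> \<in> F_reals F"
proof -
  obtain P where P: "F_rational 1 P" "\<And>x. \<bar>P [x] - \<alpha>\<bar> \<le> 1 / (real x + 1)"
    using assms(1) by (rule F_realsE) blast
  obtain Q where Q: "F_rational 1 Q" "\<And>x. \<bar>Q [x] - \<beta>\<bar> \<le> 1 / (real x + 1)"
    using assms(2) by (rule F_realsE) blast
  show ?thesis
  proof (rule F_realsI_scaled[OF F_rational_add[OF _ P(1) Q(1)], of 2])
    fix x
    have "\<bar>P [x] + Q [x] - (\<alpha> + \<beta>)\<bar> \<le> 1 / (real x + 1) + 1 / (real x + 1)"
      using P(2)[of x] Q(2)[of x] by linarith
    then show "\<bar>P [x] + Q [x] - (\<alpha> + \<beta>)\<bar> \<le> real 2 / (real x + 1)" by simp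
  qed auto
qed

lemma F_reals_mult:
  assumes "\<alpha> \<in> F_reals F" "\<beta> \<in> F_reals F"
  shows "\<alpha> * \<beta> \<in> F_reals F"
proof -
  obtain P where P: "F_rational 1 P" "\<And>x. \<bar>P [x] - \<alpha>\<bar> \<le> 1 / (real x + 1)"
    using assms(1) by (rule F_realsE) blast
  obtain Q where Q: "F_rational 1 Q" "\<And>x. \<bar>Q [x] - \<beta>\<bar> \<le> 1 / (real x + 1)"
    using assms(2) by (rule F_realsE) blast
  define K where "K = nat \<lceil>\<bar>\<alpha>\<bar> + \<bar>\<beta>\<bar> + 1\<rceil>"
  have K: "\<bar>\<alpha>\<bar> + \<bar>\<beta>\<bar> + 1 \<le> real K"
    unfolding K_def by linarith
  show ?thesis
  proof (rule F_realsI_scaled[OF F_rational_mult[OF _ P(1) Q(1)], of K])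
    show "0 < K" using K by linarith
    fix x
    define e where "e = 1 / (real x + 1)"
    have "0 \<le> e" "e \<le> 1" unfolding e_def by auto
    have P_bound: "\<bar>P [x]\<bar> \<le> \<bar>\<alpha>\<bar> + 1"
      using P(2)[of x] \<open>e \<le> 1\<close> unfolding e_def[symmetric] by linarith
    have "P [x] * Q [x] - \<alpha> * \<beta> = P [x] * (Q [x] - \<beta>) + \<beta> * (P [x] - \<alpha>)"
      by (simp add: algebra_simps)
    then have "\<bar>P [x] * Q [x] - \<alpha> * \<beta>\<bar> \<le> \<bar>P [x]\<bar> * \<bar>Q [x] - \<beta>\<bar> + \<bar>\<beta>\<bar> * \<bar>P [x] - \<alpha>\<bar>"
      by (metis abs_mult abs_triangle_ineq)
    also have "\<dots> \<le> (\<bar>\<alpha>\<bar> + 1) * e + \<bar>\<beta>\<bar> * e"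
      using P(2)[of x] Q(2)[of x] P_bound unfolding e_def[symmetric]
      by (intro add_mono mult_mono) auto
    also have "\<dots> \<le> real K * e"
      using mult_right_mono[OF K \<open>0 \<le> e\<close>] by (simp add: algebra_simps)
    finally show "\<bar>P [x] * Q [x] - \<alpha> * \<beta>\<bar> \<le> real K / (real x + 1)"
      unfolding e_def by simp
  qed auto
qed

text \<open>Skipping the first \<open>N \<ge> 2 / \<bar>\<alpha>\<bar>\<close> approximations keeps them at distance at
  least \<open>\<bar>\<alpha>\<bar> / 2\<close> from zero.\<close>

lemma F_reals_inverse:
  assumes "\<alpha> \<in> F_reals F" "\<alpha> \<noteq> 0"
  shows "inverse \<alpha> \<in> F_reals F"
proof -
  obtain P where P: "F_rational 1 P" "\<And>x. \<bar>P [x] - \<alpha>\<bar> \<le> 1 / (real x + 1)"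
    using assms(1) by (rule F_realsE) blast
  define a where "a = \<bar>\<alpha>\<bar>"
  have "a > 0" using assms(2) unfolding a_def by simp
  define N where "N = nat \<lceil>2 / a\<rceil>"
  have N: "2 / a \<le> real N" unfolding N_def by linarith
  define K where "K = nat \<lceil>2 / a\<^sup>2\<rceil> + 1"
  have K: "2 / a\<^sup>2 \<le> real K" unfolding K_def by linarith
  have shift: "in_F F 1 (\<lambda>xs. xs ! 0 + N)"
    by (intro in_F_add in_F_const in_F_proj) auto
  show ?thesis
  proof (rule F_realsI_scaled[OF F_rational_inverse[OF _ F_rational_compose1[OF P(1) shift]], of K])
    fix x
    define y where "y = x + N"
    have "2 / a < real y + 1" using N unfolding y_def by simp
    then have y_large: "1 / (real y + 1) \<le> a / 2" using \<open>a > 0\<close> by (simp add: field_simps)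
    have y_ge: "1 / (real y + 1) \<le> 1 / (real x + 1)" unfolding y_def by (simp add: frac_le)
    have Py: "\<bar>P [y] - \<alpha>\<bar> \<le> 1 / (real y + 1)" by (rule P(2))
    have Py_large: "\<bar>P [y]\<bar> \<ge> a / 2" using Py y_large unfolding a_def by linarith
    have "inverse (P [y]) - inverse \<alpha> = (\<alpha> - P [y]) / (P [y] * \<alpha>)"
      using Py_large \<open>a > 0\<close> assms(2) by (auto simp: field_simps)
    then have "\<bar>inverse (P [y]) - inverse \<alpha>\<bar> = \<bar>P [y] - \<alpha>\<bar> / (\<bar>P [y]\<bar> * a)"
      unfolding a_def by (simp add: abs_mult abs_minus_commute)
    also have "\<dots> \<le> (1 / (real x + 1)) / ((a / 2) * a)"
      using Py y_ge Py_large \<open>a > 0\<close> by (intro frac_le mult_mono) auto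
    also have "\<dots> = (2 / a\<^sup>2) / (real x + 1)" by (simp add: field_simps power2_eq_square)
    also have "\<dots> \<le> real K / (real x + 1)" by (rule divide_right_mono[OF K]) simp
    finally show "\<bar>inverse (P [[x] ! 0 + N]) - inverse \<alpha>\<bar> \<le> real K / (real x + 1)"
      unfolding y_def by simp
  qed (auto simp: K_def)
qed

lemma F_reals_subfield: "real_subfield (F_reals F)"
  unfolding real_subfield_def
  using F_reals_add F_reals_uminus[THEN F_reals_add] F_reals_mult F_reals_inverse
    F_reals_of_rat[OF Rats_0] F_reals_of_rat[OF Rats_1]
  by force

end

section \<open>Roots found by bounded search\<close>

locale minimizer_closed_class = standard_class +
  assumes minimizer_closed: "closed_under_minimizer F"
begin

lemma in_F_bounded_least:
  assumes "in_F F 2 T" "in_F F n f" "in_F F n b"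
  shows "in_F F n (\<lambda>xs. LEAST j. T [f xs, j] = 0 \<or> j = b xs)"
proof -
  have "in_F F 2 (minimizer T)"
    using minimizer_closed assms(1) unfolding closed_under_minimizer_def numeral_2_eq_2 by blast
  from in_F_compose2[OF this assms(2,3)] show ?thesis by (simp add: minimizer_def)
qed

lemma F_rational_first_nonpos:
  assumes "F_rational 2 Q"
  obtains J where "in_F F 1 (\<lambda>xs. J (xs ! 0))" "\<And>x. J x \<le> x + 1"
    "\<And>x. J x \<le> x \<Longrightarrow> Q [x, J x] \<le> 0" "\<And>x j. j < J x \<Longrightarrow> 0 < Q [x, j]"
proof -
  obtain T where T: "in_F F 2 T" "\<And>xs. length xs = 2 \<Longrightarrow> T xs = 0 \<longleftrightarrow> Q xs \<le> 0"
    using assms by (rule F_rational_nonpos_test) blast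
  define J where "J x = (LEAST j. T [x, j] = 0 \<or> j = x + 1)" for x
  have "in_F F 1 (\<lambda>xs. xs ! 0)" "in_F F 1 (\<lambda>xs. xs ! 0 + 1)"
    by (intro in_F_add in_F_proj in_F_const; simp)+
  then have "in_F F 1 (\<lambda>xs. J (xs ! 0))"
    unfolding J_def by (rule in_F_bounded_least[OF T(1)])
  moreover have "J x \<le> x + 1" for x
    unfolding J_def by (rule Least_le) simp
  moreover have "Q [x, J x] \<le> 0" if "J x \<le> x" for x
    using that LeastI[of "\<lambda>j. T [x, j] = 0 \<or> j = x + 1" "x + 1"] T(2)[of "[x, J x]"]
    unfolding J_def by auto
  moreover have "0 < Q [x, j]" if "j < J x" for x j
    using that not_less_Least[of j "\<lambda>j. T [x, j] = 0 \<or> j = x + 1"] T(2)[of "[x, j]"]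
    unfolding J_def by auto
  ultimately show ?thesis by (rule that)
qed

text \<open>The minimizer finds the first grid point \<open>a + j \<delta> / (x + 1)\<close> at which the test \<open>Q\<close>
  is nonpositive; it lies within two mesh widths of \<open>r\<close>.\<close>

lemma F_reals_grid_search:
  assumes "a \<in> \<rat>" "\<delta> \<in> \<rat>" "0 < \<delta>" "a \<le> r" "r \<le> a + \<delta>" "F_rational 2 Q"
    and nonpos: "\<And>x j. j \<le> x + 1 \<Longrightarrow> Q [x, j] \<le> 0 \<Longrightarrow> r \<le> a + (real j + 1) * \<delta> / (real x + 1)"
    and pos: "\<And>x j. j \<le> x + 1 \<Longrightarrow> 0 < Q [x, j] \<Longrightarrow> a + (real j - 1) * \<delta> / (real x + 1) \<le> r"
  shows "r \<in> F_reals F"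
proof -
  obtain J where J: "in_F F 1 (\<lambda>xs. J (xs ! 0))" "\<And>x. J x \<le> x + 1"
      "\<And>x. J x \<le> x \<Longrightarrow> Q [x, J x] \<le> 0" "\<And>x j. j < J x \<Longrightarrow> 0 < Q [x, j]"
    using assms(6) by (rule F_rational_first_nonpos) blast
  define R where "R xs = a + real (J (xs ! 0)) * \<delta> / (real (xs ! 0) + 1)" for xs
  have "F_rational 1 R"
    unfolding R_def using assms(1,2) J(1) in_F_proj[of 0 1]
    by (intro F_rational_add F_rational_divide F_rational_mult F_rational_of_rat F_rational_of_nat
        in_F_add in_F_const) auto
  moreover have "0 < nat \<lceil>2 * \<delta>\<rceil>" using assms(3) by simp
  moreover have "\<bar>R [x] - r\<bar> \<le> real (nat \<lceil>2 * \<delta>\<rceil>) / (real x + 1)" for x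
  proof -
    define e where "e = \<delta> / (real x + 1)"
    have "0 < e" using assms(3) by (simp add: e_def)
    have upper: "r \<le> a + (real (J x) + 1) * e"
    proof (cases "J x \<le> x")
      case True
      then show ?thesis using nonpos[OF J(2) J(3)] by (simp add: e_def)
    next
      case False
      then have "J x = x + 1" using J(2)[of x] by simp
      then have "(real (J x) + 1) * e = \<delta> + e" by (simp add: e_def field_simps)
      then show ?thesis using assms(5) \<open>0 < e\<close> by simp
    qed
    have lower: "a + (real (J x) - 2) * e \<le> r"
    proof (cases "J x = 0")
      case True
      then show ?thesis using assms(4) \<open>0 < e\<close> by simp
    next
      case False
      then have "a + (real (J x - 1) - 1) * e \<le> r"
        using pos[of "J x - 1" x] J(2)[of x] J(4)[of "J x - 1"] by (simp add: e_def)
      then show ?thesis using False by (simp add: of_nat_diff algebra_simps)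
    qed
    have "R [x] = a + real (J x) * e" by (simp add: R_def e_def)
    with upper lower have "\<bar>R [x] - r\<bar> \<le> 2 * e" by (simp add: abs_le_iff algebra_simps)
    also have "\<dots> \<le> real (nat \<lceil>2 * \<delta>\<rceil>) / (real x + 1)"
      by (simp add: e_def divide_right_mono real_nat_ceiling_ge)
    finally show ?thesis .
  qed
  ultimately show ?thesis by (rule F_realsI_scaled)
qed

lemma F_rational_poly_eval_approx:
  assumes "\<And>i. coeff p i \<in> F_reals F" "0 < n" "in_F F n w" "F_rational n T"
  obtains P where "F_rational n P" "\<And>xs. length xs = n \<Longrightarrow>
    \<bar>P xs - poly p (T xs)\<bar> \<le> (real (degree p) + 1) * max 1 \<bar>T xs\<bar> ^ degree p / (real (w xs) + 1)"
proof -
  have "\<forall>i. \<exists>A. F_rational 1 A \<and> (\<forall>x. \<bar>A [x] - coeff p i\<bar> \<le> 1 / (real x + 1))"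
    using assms(1) by (metis F_realsE)
  then obtain A where A: "\<And>i. F_rational 1 (A i)" "\<And>i x. \<bar>A i [x] - coeff p i\<bar> \<le> 1 / (real x + 1)"
    by metis
  define P where "P xs = (\<Sum>i\<le>degree p. A i [w xs] * T xs ^ i)" for xs
  have "F_rational n P"
    unfolding P_def using assms(2,4)
    by (intro F_rational_sum F_rational_mult F_rational_power F_rational_compose1[OF A(1) assms(3)]) auto
  moreover have "\<bar>P xs - poly p (T xs)\<bar> \<le>
      (real (degree p) + 1) * max 1 \<bar>T xs\<bar> ^ degree p / (real (w xs) + 1)" for xs
    using poly_perturbed_coeffs_error[of p "\<lambda>i. A i [w xs]" "1 / (real (w xs) + 1)" "T xs"] A(2)
    by (simp add: P_def)
  ultimately show ?thesis by (rule that)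
qed

text \<open>Coefficient precision of order \<open>(x + 1)\<^sup>k\<close> evaluates \<open>p\<close> on the grid of mesh
  \<open>\<delta> / (x + 1)\<close> with error below the \<open>k\<close>-th power of the mesh.\<close>

lemma F_rational_poly_grid_approx:
  assumes coeffs: "\<And>i. coeff p i \<in> F_reals F"
    and "a \<in> \<rat>" "\<delta> \<in> \<rat>" "0 < \<delta>" "\<delta> \<le> 1" "0 < D"
  obtains P where "F_rational 2 P" "\<And>x j. j \<le> x + 1 \<Longrightarrow>
    \<bar>P [x, j] - poly p (a + real j * \<delta> / (real x + 1))\<bar> < D * (\<delta> / (real x + 1)) ^ k"
proof -
  define R where "R = \<bar>a\<bar> + 1"
  define M where "M = (real (degree p) + 1) * R ^ degree p"
  define C where "C = nat \<lceil>M / (D * \<delta> ^ k)\<rceil> + 1"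
  have "0 < C" by (simp add: C_def)
  have "M / (D * \<delta> ^ k) < real C" unfolding C_def by linarith
  then have C: "M / real C < D * \<delta> ^ k"
    using \<open>0 < D\<close> \<open>0 < \<delta>\<close> \<open>0 < C\<close> by (simp add: field_simps)
  define w where "w x = C * (x + 1) ^ k - 1" for x
  have w: "real (w x) + 1 = real C * (real x + 1) ^ k" for x
  proof -
    have "1 \<le> C * (x + 1) ^ k" using \<open>0 < C\<close> by (simp add: Suc_le_eq)
    then show ?thesis by (simp add: w_def of_nat_diff add.commute)
  qed
  have grid_F: "F_rational 2 (\<lambda>xs. a + real (xs ! 1) * \<delta> / (real (xs ! 0) + 1))"
    using assms(2,3) in_F_proj[of 0 2] in_F_proj[of 1 2]
    by (intro F_rational_add F_rational_divide F_rational_mult F_rational_of_rat F_rational_of_nat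
        in_F_add in_F_const) auto
  have w_F: "in_F F 2 (\<lambda>xs. w (xs ! 0))"
    unfolding w_def using in_F_proj[of 0 2]
    by (intro in_F_diff in_F_mult in_F_power in_F_add in_F_const) auto
  obtain P where "F_rational 2 P" and P: "\<And>xs. length xs = 2 \<Longrightarrow>
      \<bar>P xs - poly p (a + real (xs ! 1) * \<delta> / (real (xs ! 0) + 1))\<bar> \<le> (real (degree p) + 1) *
        max 1 \<bar>a + real (xs ! 1) * \<delta> / (real (xs ! 0) + 1)\<bar> ^ degree p / (real (w (xs ! 0)) + 1)"
    using F_rational_poly_eval_approx[OF coeffs zero_less_numeral w_F grid_F] by blast
  show ?thesis
  proof (rule that[OF \<open>F_rational 2 P\<close>])
    fix x j :: nat assume "j \<le> x + 1"
    define t where "t = a + real j * \<delta> / (real x + 1)"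
    have "max 1 \<bar>t\<bar> \<le> R"
      using grid_offset_bounds[OF \<open>j \<le> x + 1\<close> less_imp_le[OF \<open>0 < \<delta>\<close>]] \<open>\<delta> \<le> 1\<close>
      unfolding t_def R_def by linarith
    then have "max 1 \<bar>t\<bar> ^ degree p \<le> R ^ degree p" by (intro power_mono) auto
    have "\<bar>P [x, j] - poly p t\<bar> \<le> (real (degree p) + 1) * max 1 \<bar>t\<bar> ^ degree p / (real (w x) + 1)"
      using P[of "[x, j]"] by (simp add: t_def)
    also have "\<dots> \<le> M / real C / (real x + 1) ^ k"
      unfolding w M_def using \<open>max 1 \<bar>t\<bar> ^ degree p \<le> R ^ degree p\<close> \<open>0 < C\<close>
      by (simp add: divide_right_mono mult_left_mono)
    also have "\<dots> < D * \<delta> ^ k / (real x + 1) ^ k"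
      using C by (simp add: divide_strict_right_mono flip: divide_divide_eq_left)
    also have "\<dots> = D * (\<delta> / (real x + 1)) ^ k" by (simp add: power_divide)
    finally show "\<bar>P [x, j] - poly p (a + real j * \<delta> / (real x + 1))\<bar> < D * (\<delta> / (real x + 1)) ^ k"
      unfolding t_def .
  qed
qed

lemma F_reals_odd_power_factor_root:
  assumes coeffs: "\<And>i. coeff p i \<in> F_reals F"
    and p: "p = [:-r, 1:] ^ k * g" and "poly g r > 0" "odd k"
  shows "r \<in> F_reals F"
proof -
  define D where "D = poly g r / 2"
  have "0 < D" using assms(3) by (simp add: D_def)
  obtain \<eta> where "\<eta> > 0" and g_near: "\<And>t. \<bar>t - r\<bar> \<le> \<eta> \<Longrightarrow> D \<le> poly g t"
    using poly_bounded_below_near[OF assms(3)] unfolding D_def by blast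
  define N where "N = nat \<lceil>1 / \<eta>\<rceil> + 1"
  define \<delta> where "\<delta> = 1 / real N"
  define a where "a = real_of_int \<lfloor>r * N\<rfloor> / real N"
  have "0 < N" by (simp add: N_def)
  have "1 / \<eta> < real N" unfolding N_def by linarith
  then have "\<delta> \<le> \<eta>" "0 < \<delta>" "\<delta> \<le> 1"
    using \<open>\<eta> > 0\<close> \<open>0 < N\<close> by (auto simp: \<delta>_def field_simps)
  have "a \<in> \<rat>" "\<delta> \<in> \<rat>" by (simp_all add: a_def \<delta>_def)
  have "a \<le> r" "r \<le> a + \<delta>"
    using \<open>0 < N\<close> by (simp_all add: a_def \<delta>_def field_simps) linarith+
  obtain P where "F_rational 2 P" and err: "\<And>x j. j \<le> x + 1 \<Longrightarrow>
      \<bar>P [x, j] - poly p (a + real j * \<delta> / (real x + 1))\<bar> < D * (\<delta> / (real x + 1)) ^ k"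
    using F_rational_poly_grid_approx[OF coeffs \<open>a \<in> \<rat>\<close> \<open>\<delta> \<in> \<rat>\<close> \<open>0 < \<delta>\<close> \<open>\<delta> \<le> 1\<close> \<open>0 < D\<close>]
    by blast
  have near: "\<bar>a + real j * \<delta> / (real x + 1) - r\<bar> \<le> \<eta>" if "j \<le> x + 1" for x j
    using grid_offset_bounds[OF that less_imp_le[OF \<open>0 < \<delta>\<close>]] \<open>a \<le> r\<close> \<open>r \<le> a + \<delta>\<close> \<open>\<delta> \<le> \<eta>\<close>
    by linarith
  have e: "0 < \<delta> / (real x + 1)" for x using \<open>0 < \<delta>\<close> by simp
  note sign_test = odd_root_sign_test[OF \<open>odd k\<close> g_near e near err[unfolded p]]
  show ?thesis
  proof (rule F_reals_grid_search[OF \<open>a \<in> \<rat>\<close> \<open>\<delta> \<in> \<rat>\<close> \<open>0 < \<delta>\<close> \<open>a \<le> r\<close> \<open>r \<le> a + \<delta>\<close>])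
    show "F_rational 2 (\<lambda>xs. - P xs)" using \<open>F_rational 2 P\<close> by (rule F_rational_uminus)
  next
    fix x j :: nat assume "j \<le> x + 1" "- P [x, j] \<le> 0"
    then have "r < a + real j * \<delta> / (real x + 1) + \<delta> / (real x + 1)"
      using sign_test(1) by simp
    then show "r \<le> a + (real j + 1) * \<delta> / (real x + 1)"
      by (simp add: add_divide_distrib distrib_right)
  next
    fix x j :: nat assume "j \<le> x + 1" "0 < - P [x, j]"
    then have "a + real j * \<delta> / (real x + 1) - \<delta> / (real x + 1) < r"
      using sign_test(2) by simp
    then show "a + (real j - 1) * \<delta> / (real x + 1) \<le> r"
      by (simp add: diff_divide_distrib left_diff_distrib)
  qed
qed

lemma F_reals_odd_order_root:
  assumes "\<And>i. coeff p i \<in> F_reals F" "p \<noteq> 0" "odd (order r p)"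
  shows "r \<in> F_reals F"
proof -
  obtain g where g: "p = [:-r, 1:] ^ order r p * g" "\<not> [:-r, 1:] dvd g"
    using order_decomp[OF assms(2)] by blast
  then have "poly g r \<noteq> 0" by (simp add: poly_eq_0_iff_dvd)
  then consider "poly g r > 0" | "poly (- g) r > 0" by fastforce
  then show ?thesis
  proof cases
    case 1
    show ?thesis by (rule F_reals_odd_power_factor_root[OF assms(1) g(1) 1 assms(3)])
  next
    case 2
    have "coeff (- p) i \<in> F_reals F" for i using F_reals_uminus[OF assms(1)] by simp
    moreover have "- p = [:-r, 1:] ^ order r p * (- g)" using g(1) by simp
    ultimately show ?thesis by (rule F_reals_odd_power_factor_root[OF _ _ 2 assms(3)])
  qed
qed

lemma F_reals_odd_degree_root:
  assumes "\<And>i. coeff p i \<in> F_reals F" "odd (degree p)"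
  shows "\<exists>x\<in>F_reals F. poly p x = 0"
proof -
  obtain r where "odd (order r p)" using poly_odd_degree_odd_order_root[OF assms(2)] by blast
  moreover have "p \<noteq> 0" using assms(2) by auto
  ultimately have "r \<in> F_reals F" "poly p r = 0"
    using F_reals_odd_order_root[OF assms(1)] order_root odd_pos by blast+
  then show ?thesis by blast
qed

lemma F_reals_sqrt:
  assumes "x \<in> F_reals F" "0 \<le> x"
  shows "sqrt x \<in> F_reals F"
proof (cases "x = 0")
  case True
  then show ?thesis using F_reals_of_rat[of 0] by simp
next
  case False
  have "coeff [:-x, 0, 1:] i \<in> F_reals F" for i
  proof -
    have "coeff [:-x, 0, 1:] i \<in> {-x, 0, 1}" by (simp add: coeff_pCons split: nat.split)
    then show ?thesis
      using F_reals_uminus[OF assms(1)] F_reals_of_rat[of 0] F_reals_of_rat[of 1] by auto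
  qed
  moreover have "[:-x, 0, 1:] = [:- sqrt x, 1:] ^ 1 * [:sqrt x, 1:]"
    using assms(2) by (simp add: algebra_simps)
  moreover have "poly [:sqrt x, 1:] (sqrt x) > 0" using assms(2) False by simp
  ultimately show ?thesis by (rule F_reals_odd_power_factor_root) simp
qed

end

theorem mainTheorem14:
  fixes F :: fclass
  assumes "standard_conditions F"
    and "closed_under_minimizer F"
  shows "real_closed_subfield (F_reals F)"
proof -
  interpret minimizer_closed_class F
    using assms by unfold_locales
  have "\<exists>y\<in>F_reals F. y * y = x" if "x \<in> F_reals F" "0 \<le> x" for x
    using F_reals_sqrt[OF that] that(2) by (intro bexI[of _ "sqrt x"]) simp_all
  then show ?thesis
    unfolding real_closed_subfield_def using F_reals_subfield F_reals_odd_degree_root by blast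
qed

end
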